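(* For every integer $k\ge2$ there is a constant $C>0$ such that for every integer $q\ge2$, every $\alpha\in(0,1/k)$ and all nonnegative integers $n,u,o,\eta,\kappa$, $$p_q(n,u,o,\eta,\kappa)\le\alpha^{(o+\eta)/k}\cdot C^u\cdot(n/\kappa)^\kappa\cdot\left(u/\sqrt{n\eta}\right)^\eta\cdot(u/n)^o,$$ with the convention $x^0=1$ for the factors with exponent $0$.
   Context: Let $n,q,k\in\mathbb{N}$, $\alpha\in(0,1/k)$ with $\alpha n$ an integer. For $\mathbf{u}\in\mathbb{Z}_q^n$ and a $k$-hypermatching $M=(e_1,\dots,e_m)$ on $[n]$ (pairwise disjoint $k$-element subsets, with indicator vectors $\mathbf{e}_i$), let $K_{\mathbf{u}}(M)=\{i\in[m]:\langle\mathbf{u},\mathbf{e}_i\rangle\not\equiv0\pmod q\}$, $E_{\mathbf{u}}(M)=\{j\in[n]:u_j\ne0,\ j\in e_i\text{ for some }i\notin K_{\mathbf{u}}(M)\}$ and $O_{\mathbf{u}}(M)=\{j\in[n]:u_j\ne0,\ j\in e_i\text{ for some }i\in K_{\mathbf{u}}(M)\}$. Define $p_q(n,u,o,\eta,\kappa)=\max_{\mathbf{u}\in(\mathbb{Z}_q\setminus\{0\})^u\times\{0\}^{n-u}}\Pr_M\big[|K_{\mathbf{u}}(M)|=\kappa,\ |E_{\mathbf{u}}(M)|=\eta,\ |O_{\mathbf{u}}(M)|=o\big]$, where $M$ is a uniformly random $k$-hypermatching of size $\alpha n$ on $[n]$. *)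

theory Defs
  imports Complex_Main
begin

text \<open>Ordered k-hypermatchings (e_1,...,e_m) on [n] = {1..n}: lists of m pairwise
disjoint k-element subsets of {1..n}. A uniformly random hypermatching is the uniform
distribution on this finite set.\<close>
definition hypermatchings :: "nat \<Rightarrow> nat \<Rightarrow> nat \<Rightarrow> nat set list set" where
  "hypermatchings k n m = {M. length M = m \<and>
     (\<forall>i<m. M ! i \<subseteq> {1..n} \<and> card (M ! i) = k) \<and>
     (\<forall>i<m. \<forall>j<m. i \<noteq> j \<longrightarrow> M ! i \<inter> M ! j = {})}"

text \<open>Vectors of Z_q^n are represented by functions nat => int with entries in {0..q-1}
on indices 1..n. K_u(M): indices i with <u,e_i> not congruent to 0 mod q.\<close>
definition K_set :: "nat \<Rightarrow> (nat \<Rightarrow> int) \<Rightarrow> nat set list \<Rightarrow> nat set" where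
  "K_set q u M = {i. i < length M \<and> \<not> (int q dvd (\<Sum>j\<in>M ! i. u j))}"

definition E_set :: "nat \<Rightarrow> nat \<Rightarrow> (nat \<Rightarrow> int) \<Rightarrow> nat set list \<Rightarrow> nat set" where
  "E_set q n u M = {j \<in> {1..n}. u j \<noteq> 0 \<and>
     (\<exists>i<length M. i \<notin> K_set q u M \<and> j \<in> M ! i)}"

definition O_set :: "nat \<Rightarrow> nat \<Rightarrow> (nat \<Rightarrow> int) \<Rightarrow> nat set list \<Rightarrow> nat set" where
  "O_set q n u M = {j \<in> {1..n}. u j \<noteq> 0 \<and>
     (\<exists>i<length M. i \<in> K_set q u M \<and> j \<in> M ! i)}"

definition test_vectors :: "nat \<Rightarrow> nat \<Rightarrow> nat \<Rightarrow> (nat \<Rightarrow> int) set" where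
  "test_vectors q n u = {f. u \<le> n \<and>
     (\<forall>j. (1 \<le> j \<and> j \<le> u \<longrightarrow> f j \<in> {1..int q - 1}) \<and>
          (\<not> (1 \<le> j \<and> j \<le> u) \<longrightarrow> f j = 0))}"

definition event_prob ::
  "nat \<Rightarrow> nat \<Rightarrow> nat \<Rightarrow> nat \<Rightarrow> (nat \<Rightarrow> int) \<Rightarrow> nat \<Rightarrow> nat \<Rightarrow> nat \<Rightarrow> real" where
  "event_prob k n m q u oo \<eta> \<kappa> =
     real (card {M \<in> hypermatchings k n m. card (K_set q u M) = \<kappa> \<and>
                  card (E_set q n u M) = \<eta> \<and> card (O_set q n u M) = oo})
     / real (card (hypermatchings k n m))"

text \<open>p_q(n,u,o,eta,kappa), with matchings of size alpha*n (assumed integral).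
The maximum over an empty set of vectors (u > n) is taken to be 0.\<close>
definition p_q ::
  "nat \<Rightarrow> real \<Rightarrow> nat \<Rightarrow> nat \<Rightarrow> nat \<Rightarrow> nat \<Rightarrow> nat \<Rightarrow> nat \<Rightarrow> real" where
  "p_q k \<alpha> q n u oo \<eta> \<kappa> =
     Max (insert 0 ((\<lambda>f. event_prob k n (nat \<lfloor>\<alpha> * real n\<rfloor>) q f oo \<eta> \<kappa>)
                    ` test_vectors q n u))"

end

theory Submission
  imports Defs "HOL-Library.FuncSet" "HOL-Combinatorics.Transposition"
begin

text \<open>
  Fix a test vector supported on the first u coordinates and a matching M in the event.
  Each coordinate of O lies in one of the \<kappa> blocks of K, and each coordinate of E lies in a
  block outside K that contains at least two support coordinates, since a single entry in
  (0, q) is not divisible by q. Hence the E-coordinates occupy some r \<le> \<eta>/2 blocks, and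
  o + \<eta> \<le> k (\<kappa> + r). The sets O, E together with the blocks of their coordinates form a
  configuration, of which there are at most C(u,o) C(u,\<eta>) C(m,\<kappa>) \<kappa>^o C(m,r) r^\<eta>.
  Transpositions of [n] preserve the uniform distribution on hypermatchings, so a prescribed
  placement of t = o + \<eta> coordinates into given blocks has probability at most k^t / (n)_t.
  Summing over configurations and over the at most u + 1 values of r, and estimating
  C(m,c) \<le> (e \<alpha> n / c)^c and \<alpha>^(\<kappa>+r) \<le> \<alpha>^((o+\<eta>)/k), gives the bound with C = 2 e^4 k.
\<close>

definition falling_fact :: "nat \<Rightarrow> nat \<Rightarrow> nat" where
  "falling_fact n t = (\<Prod>s<t. n - s)"

lemma power_le_exp_mult_fact:
  fixes x :: real
  assumes "0 \<le> x"
  shows "x ^ n \<le> exp x * fact n"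
proof -
  have "x ^ n / fact n \<le> (\<Sum>i\<le>n. x ^ i / fact i)"
    by (rule member_le_sum) (auto simp: assms)
  also have "\<dots> \<le> exp x"
    using assms summable_exp_generic[of x]
    by (auto simp: exp_def divide_inverse ac_simps intro!: sum_le_suminf)
  finally show ?thesis
    by (simp add: divide_le_eq mult.commute)
qed

lemma binomial_le_power_div_fact: "real (n choose k) \<le> real n ^ k / fact k"
proof -
  have "real ((n choose k) * fact k) \<le> real (n ^ k)"
    by (simp only: of_nat_le_iff binomial_fact_pow)
  then show ?thesis
    by (simp add: le_divide_eq)
qed

lemma ratio_power_le_exp:
  assumes "1 \<le> r" "r \<le> e"
  shows "(real e / real r) ^ r \<le> exp (real e)"
proof -
  have "real e / real r = 1 + (real e - real r) / real r"
    using assms by (simp add: field_simps)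
  also have "\<dots> \<le> exp ((real e - real r) / real r)"
    by (rule exp_ge_add_one_self)
  finally have "(real e / real r) ^ r \<le> exp ((real e - real r) / real r) ^ r"
    using assms by (intro power_mono) auto
  also have "\<dots> = exp (real e - real r)"
    using assms by (simp add: exp_of_nat_mult [symmetric])
  also have "\<dots> \<le> exp (real e)"
    by simp
  finally show ?thesis .
qed

lemma falling_fact_pos: "t \<le> n \<Longrightarrow> 0 < falling_fact n t"
  by (auto simp: falling_fact_def intro!: prod_pos)

lemma fact_diff_mult_falling_fact: "t \<le> n \<Longrightarrow> fact (n - t) * falling_fact n t = (fact n :: nat)"
proof (induction t)
  case 0
  then show ?case by (simp add: falling_fact_def)
next
  case (Suc t)
  have "fact (n - t) = (n - t) * (fact (n - Suc t) :: nat)"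
    using Suc.prems by (metis Suc_diff_Suc Suc_le_lessD fact_Suc of_nat_id)
  then show ?case
    using Suc by (simp add: falling_fact_def ac_simps)
qed

lemma falling_fact_eq_binomial_mult_fact: "t \<le> n \<Longrightarrow> falling_fact n t = (n choose t) * fact t"
proof -
  assume "t \<le> n"
  then have "fact (n - t) * falling_fact n t = fact (n - t) * ((n choose t) * fact t)"
    using fact_diff_mult_falling_fact binomial_fact_lemma by (simp add: ac_simps)
  then show ?thesis
    by simp
qed

lemma inverse_falling_fact_le:
  assumes "t \<le> n" "0 < n"
  shows "1 / real (falling_fact n t) \<le> exp (real t) / real n ^ t"
proof -
  have "real n ^ t = (real n / real t) ^ t * real t ^ t"
    using assms by (cases "t = 0") (simp_all add: power_divide)
  also have "\<dots> \<le> real (n choose t) * (exp (real t) * fact t)"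
    by (intro mult_mono binomial_ge_n_over_k_pow_k power_le_exp_mult_fact assms) auto
  also have "\<dots> = exp (real t) * real (falling_fact n t)"
    using assms by (simp add: falling_fact_eq_binomial_mult_fact)
  finally show ?thesis
    using assms falling_fact_pos[OF assms(1)] by (simp add: divide_simps mult.commute)
qed

lemma binomial_mult_power_le:
  assumes "c \<le> b"
  shows "real (u choose b) * real c ^ b \<le> real u ^ b * exp (real b)"
proof -
  have "real (u choose b) * real c ^ b \<le> (real u ^ b / fact b) * (exp (real b) * fact b)"
    using assms power_le_exp_mult_fact[of "real b" b] power_mono[of "real c" "real b" b]
    by (intro mult_mono binomial_le_power_div_fact) auto
  then show ?thesis
    by simp
qed

lemma binomial_le_of_le_mult:
  assumes "real m \<le> a * real n" "0 \<le> a"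
  shows "real (m choose c) \<le> exp (real c) * a ^ c * (real n / real c) ^ c"
proof (cases "c = 0")
  case True
  then show ?thesis by simp
next
  case False
  have "real (m choose c) \<le> (a * real n) ^ c / fact c"
    using binomial_le_power_div_fact[of m c] power_mono[OF assms(1), of c]
    by (simp add: divide_right_mono order_trans)
  also have "\<dots> \<le> (a * real n) ^ c * (exp (real c) / real c ^ c)"
  proof -
    have "real c ^ c \<le> exp (real c) * fact c"
      by (rule power_le_exp_mult_fact) simp
    moreover have "0 \<le> (a * real n) ^ c"
      using assms by simp
    ultimately show ?thesis
      using False by (simp add: divide_simps) (metis mult.commute mult_left_mono mult.assoc)
  qed
  also have "\<dots> = exp (real c) * a ^ c * (real n / real c) ^ c"
    by (simp add: power_divide power_mult_distrib)
  finally show ?thesis .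
qed

lemma ratio_power_mult_le_sqrt_power:
  assumes "1 \<le> r" "2 * r \<le> \<eta>" "\<eta> \<le> n"
  shows "(real n / real r) ^ r * real u ^ \<eta> / real n ^ \<eta>
         \<le> exp (real \<eta>) * (real u / sqrt (real n * real \<eta>)) ^ \<eta>"
proof -
  define s where "s = sqrt (real n * real \<eta>)"
  have pos: "0 < real r" "0 < real \<eta>" "0 < real n" "0 < s"
    using assms by (auto simp: s_def)
  have "(s ^ \<eta>) ^ 2 = (s ^ 2) ^ \<eta>"
    by (simp flip: power_mult add: mult.commute)
  then have s_pow: "(s ^ \<eta>) ^ 2 = (real n * real \<eta>) ^ \<eta>"
    by (simp add: s_def)
  have "((real n / real r) ^ r * s ^ \<eta>) ^ 2
        = (real n / real \<eta>) ^ (2 * r) * (real \<eta> / real r) ^ (2 * r) * (real n * real \<eta>) ^ \<eta>"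
    using pos by (simp only: power_mult_distrib s_pow) (simp add: power_divide field_simps flip: power_mult)
  also have "\<dots> \<le> (real n / real \<eta>) ^ \<eta> * (real \<eta> / real r) ^ (2 * r) * (real n * real \<eta>) ^ \<eta>"
    using assms pos by (intro mult_right_mono power_increasing) auto
  also have "\<dots> = (real n ^ \<eta> * (real \<eta> / real r) ^ r) ^ 2"
    using pos by (simp add: power_mult_distrib power_divide field_simps flip: power_mult)
      (simp add: mult_2_right power_add)
  also have "\<dots> \<le> (real n ^ \<eta> * exp (real \<eta>)) ^ 2"
    using assms by (intro power_mono mult_left_mono ratio_power_le_exp) auto
  finally have "(real n / real r) ^ r * s ^ \<eta> \<le> real n ^ \<eta> * exp (real \<eta>)"
    by (rule power2_le_imp_le) simp
  then have "(real n / real r) ^ r * s ^ \<eta> * real u ^ \<eta> \<le> real n ^ \<eta> * exp (real \<eta>) * real u ^ \<eta>"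
    by (rule mult_right_mono) simp
  then show ?thesis
    using pos unfolding s_def [symmetric] by (simp add: power_divide divide_simps ac_simps)
qed

lemma power_le_powr_of_le:
  fixes a x :: real
  assumes "0 < a" "a \<le> 1" "0 \<le> x" "x \<le> real n"
  shows "a ^ n \<le> a powr x"
  using assms powr_mono'[of x "real n" a] by (simp add: powr_realpow)

lemma configuration_weight_le_product:
  fixes a :: real
  assumes "0 \<le> a" "real m \<le> a * real n" "0 < n"
    and "\<kappa> \<le> oo" "2 * r \<le> \<eta>" "oo + \<eta> \<le> n"
  shows "real ((u choose oo) * (u choose \<eta>) * ((m choose \<kappa>) * \<kappa> ^ oo) * ((m choose r) * r ^ \<eta>))
           * (real k ^ (oo + \<eta>) / real (falling_fact n (oo + \<eta>)))
         \<le> exp (real (oo + \<kappa> + \<eta> + r + (oo + \<eta>))) * real k ^ (oo + \<eta>) * a ^ (\<kappa> + r)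
           * (real n / real \<kappa>) ^ \<kappa> * (real u / real n) ^ oo
           * ((real n / real r) ^ r * real u ^ \<eta> / real n ^ \<eta>)"
    (is "?lhs \<le> _")
proof -
  define t where "t = oo + \<eta>"
  have "?lhs = (real (u choose oo) * real \<kappa> ^ oo) * real (m choose \<kappa>)
      * (real (u choose \<eta>) * real r ^ \<eta>) * real (m choose r) * (real k ^ t * (1 / real (falling_fact n t)))"
    by (simp add: t_def)
  also have "\<dots> \<le> (real u ^ oo * exp (real oo)) * (exp (real \<kappa>) * a ^ \<kappa> * (real n / real \<kappa>) ^ \<kappa>)
      * (real u ^ \<eta> * exp (real \<eta>)) * (exp (real r) * a ^ r * (real n / real r) ^ r)
      * (real k ^ t * (exp (real t) / real n ^ t))"
    using assms unfolding t_def
    by (intro mult_mono binomial_mult_power_le binomial_le_of_le_mult inverse_falling_fact_le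
        mult_nonneg_nonneg) auto
  also have "\<dots> = exp (real (oo + \<kappa> + \<eta> + r + t)) * real k ^ t * a ^ (\<kappa> + r)
      * (real n / real \<kappa>) ^ \<kappa> * (real u / real n) ^ oo * ((real n / real r) ^ r * real u ^ \<eta> / real n ^ \<eta>)"
    using assms by (simp add: exp_add power_add power_divide field_simps) (simp add: t_def power_add)
  finally show ?thesis
    by (simp add: t_def)
qed

lemma exp_factors_le:
  assumes "1 \<le> k" "\<kappa> \<le> oo" "2 * r \<le> \<eta>" "oo + \<eta> \<le> u"
  shows "exp (real (oo + \<kappa> + \<eta> + r + (oo + \<eta>))) * exp (real \<eta>) * real k ^ (oo + \<eta>)
       \<le> (exp 4 * real k) ^ u"
proof -
  have "exp (real (oo + \<kappa> + \<eta> + r + (oo + \<eta>))) * exp (real \<eta>) \<le> exp 4 ^ u"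
    using assms by (simp add: exp_of_nat_mult [symmetric] flip: exp_add)
  moreover have "real k ^ (oo + \<eta>) \<le> real k ^ u"
    using assms by (intro power_increasing) auto
  ultimately show ?thesis
    by (simp add: power_mult_distrib mult_mono)
qed

definition p_bound :: "nat \<Rightarrow> real \<Rightarrow> real \<Rightarrow> nat \<Rightarrow> nat \<Rightarrow> nat \<Rightarrow> nat \<Rightarrow> nat \<Rightarrow> real" where
  "p_bound k \<alpha> C n u oo \<eta> \<kappa> =
     \<alpha> powr ((real oo + real \<eta>) / real k) * C ^ u * (real n / real \<kappa>) ^ \<kappa>
     * (real u / sqrt (real n * real \<eta>)) ^ \<eta> * (real u / real n) ^ oo"

lemma p_bound_nonneg: "0 \<le> C \<Longrightarrow> 0 \<le> p_bound k \<alpha> C n u oo \<eta> \<kappa>"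
  by (simp add: p_bound_def)

lemma p_bound_mult_constant:
  "p_bound k \<alpha> (c * C) n u oo \<eta> \<kappa> = c ^ u * p_bound k \<alpha> C n u oo \<eta> \<kappa>"
  by (simp add: p_bound_def power_mult_distrib ac_simps)

lemma configuration_weight_le_p_bound:
  fixes a :: real
  assumes a: "0 < a" "a \<le> 1" and m: "real m \<le> a * real n" and k: "1 \<le> k"
    and "\<kappa> \<le> oo" "2 * r \<le> \<eta>" "oo + \<eta> \<le> u" "u \<le> n" "oo + \<eta> \<le> k * (\<kappa> + r)"
  shows "real ((u choose oo) * (u choose \<eta>) * ((m choose \<kappa>) * \<kappa> ^ oo) * ((m choose r) * r ^ \<eta>))
           * (real k ^ (oo + \<eta>) / real (falling_fact n (oo + \<eta>)))
         \<le> p_bound k a (exp 4 * real k) n u oo \<eta> \<kappa>"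
    (is "?lhs \<le> _")
proof -
  define t where "t = oo + \<eta>"
  consider "0 < oo \<and> \<kappa> = 0 \<or> 0 < \<eta> \<and> r = 0" | "n = 0"
    | "0 < n" "\<kappa> = 0 \<longrightarrow> oo = 0" "r = 0 \<longrightarrow> \<eta> = 0"
    by (metis bot_nat_0.not_eq_extremum)
  then show ?thesis
  proof cases
    case 1
    then show ?thesis
      using a by (auto simp: p_bound_def power_0_left)
  next
    case 2
    then show ?thesis
      using assms by (simp add: p_bound_def falling_fact_def)
  next
    case 3
    let ?rest = "(real n / real \<kappa>) ^ \<kappa> * (real u / real n) ^ oo"
    have "?lhs \<le> exp (real (oo + \<kappa> + \<eta> + r + t)) * real k ^ t * a ^ (\<kappa> + r)
        * (real n / real \<kappa>) ^ \<kappa> * (real u / real n) ^ oo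
        * ((real n / real r) ^ r * real u ^ \<eta> / real n ^ \<eta>)"
      unfolding t_def using assms 3 by (intro configuration_weight_le_product) auto
    also have "\<dots> \<le> exp (real (oo + \<kappa> + \<eta> + r + t)) * real k ^ t * a powr (real t / real k)
        * (real n / real \<kappa>) ^ \<kappa> * (real u / real n) ^ oo
        * (exp (real \<eta>) * (real u / sqrt (real n * real \<eta>)) ^ \<eta>)"
    proof -
      have "real t \<le> real k * real (\<kappa> + r)"
        using assms unfolding t_def by (metis of_nat_le_iff of_nat_mult)
      then have "a ^ (\<kappa> + r) \<le> a powr (real t / real k)"
        using a k by (intro power_le_powr_of_le) (auto simp: divide_le_eq mult.commute)
      moreover have "(real n / real r) ^ r * real u ^ \<eta> / real n ^ \<eta>
          \<le> exp (real \<eta>) * (real u / sqrt (real n * real \<eta>)) ^ \<eta>"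
        using assms 3 by (cases "\<eta> = 0") (auto intro!: ratio_power_mult_le_sqrt_power)
      ultimately show ?thesis
        using a by (intro mult_mono order_refl) auto
    qed
    also have "\<dots> = exp (real (oo + \<kappa> + \<eta> + r + t)) * exp (real \<eta>) * real k ^ t
        * (a powr (real t / real k) * ?rest * (real u / sqrt (real n * real \<eta>)) ^ \<eta>)"
      by (simp add: ac_simps)
    also have "\<dots> \<le> (exp 4 * real k) ^ u
        * (a powr (real t / real k) * ?rest * (real u / sqrt (real n * real \<eta>)) ^ \<eta>)"
      unfolding t_def using assms by (intro mult_right_mono exp_factors_le) auto
    finally show ?thesis
      unfolding p_bound_def t_def by (simp add: ac_simps)
  qed
qed

lemma transpose_mem_image_iff:
  "a \<in> transpose a b ` S \<longleftrightarrow> b \<in> S" "b \<in> transpose a b ` S \<longleftrightarrow> a \<in> S"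
  by (auto simp: image_iff transpose_def)

lemma card_Sigma_le_sum:
  assumes "finite A"
  shows "card (SIGMA a:A. B a) \<le> (\<Sum>a\<in>A. card (B a))"
proof (cases "\<forall>a\<in>A. finite (B a)")
  case True
  then show ?thesis
    using assms by simp
next
  case False
  then obtain a where "a \<in> A" "infinite (B a)"
    by blast
  moreover have "{a} \<times> B a \<subseteq> (SIGMA a:A. B a)"
    using \<open>a \<in> A\<close> by blast
  ultimately have "infinite (SIGMA a:A. B a)"
    using finite_cartesian_productD2 finite_subset by blast
  then show ?thesis
    by simp
qed

lemma card_le_mult_card_image:
  assumes "finite A" "\<And>y. y \<in> g ` A \<Longrightarrow> card {x \<in> A. g x = y} \<le> c"
  shows "card A \<le> c * card (g ` A)"
proof -
  have "card A = (\<Sum>y\<in>g ` A. card {x \<in> A. g x = y})"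
    using sum.image_gen[OF assms(1), of "\<lambda>_. 1::nat" g] by simp
  also have "\<dots> \<le> c * card (g ` A)"
    using sum_bounded_above[of "g ` A" "\<lambda>y. card {x \<in> A. g x = y}" c] assms(2) by (simp add: mult.commute)
  finally show ?thesis .
qed

lemma mult_card_image_le_card:
  assumes "finite A" "\<And>y. y \<in> g ` A \<Longrightarrow> c \<le> card {x \<in> A. g x = y}"
  shows "c * card (g ` A) \<le> card A"
proof -
  have "c * card (g ` A) \<le> (\<Sum>y\<in>g ` A. card {x \<in> A. g x = y})"
    using sum_bounded_below[of "g ` A" c "\<lambda>y. card {x \<in> A. g x = y}"] assms(2) by (simp add: mult.commute)
  also have "\<dots> = card A"
    using sum.image_gen[OF assms(1), of "\<lambda>_. 1::nat" g] by simp
  finally show ?thesis .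
qed

lemma finite_hypermatchings: "finite (hypermatchings k n m)"
proof (rule finite_subset)
  show "hypermatchings k n m \<subseteq> {M. set M \<subseteq> Pow {1..n} \<and> length M = m}"
    by (auto simp: hypermatchings_def in_set_conv_nth) (meson atLeastAtMost_iff subsetD)+
  show "finite {M. set M \<subseteq> Pow {1..n} \<and> length M = m}"
    by (rule finite_lists_length_eq) simp
qed

lemma hypermatching_nth:
  assumes "M \<in> hypermatchings k n m" "i < m"
  shows "length M = m" "M ! i \<subseteq> {1..n}" "card (M ! i) = k"
  using assms by (simp_all add: hypermatchings_def)

lemma transpose_hypermatching:
  assumes "M \<in> hypermatchings k n m" "a \<in> {1..n}" "b \<in> {1..n}"
  shows "map ((`) (transpose a b)) M \<in> hypermatchings k n m"
proof -
  have "transpose a b ` S \<subseteq> {1..n}" if "S \<subseteq> {1..n}" for S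
    using that assms(2,3) by (auto simp: transpose_def)
  moreover have "card (transpose a b ` S) = card S" for S
    by (simp add: card_image)
  moreover have "transpose a b ` S \<inter> transpose a b ` S' = {}" if "S \<inter> S' = {}" for S S'
    using that by (simp flip: image_Int)
  ultimately show ?thesis
    using assms(1) by (auto simp: hypermatchings_def)
qed

definition placing_matchings :: "nat \<Rightarrow> nat \<Rightarrow> nat \<Rightarrow> nat set \<Rightarrow> (nat \<Rightarrow> nat) \<Rightarrow> nat set list set" where
  "placing_matchings k n m T g = {M \<in> hypermatchings k n m. \<forall>j\<in>T. g j < m \<and> j \<in> M ! g j}"

lemma finite_placing_matchings: "finite (placing_matchings k n m T g)"
  using finite_hypermatchings by (rule finite_subset[rotated]) (auto simp: placing_matchings_def)

lemma transpose_placing_matching: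
  assumes "M \<in> placing_matchings k n m T g" "a \<in> {1..n} - T" "b \<in> {1..n} - T"
  shows "map ((`) (transpose a b)) M \<in> placing_matchings k n m T g"
proof -
  have "length M = m"
    using assms(1) by (simp add: placing_matchings_def hypermatchings_def)
  moreover have "transpose a b j = j" if "j \<in> T" for j
    using that assms(2,3) by (metis DiffD2 transpose_apply_other)
  ultimately show ?thesis
    using assms transpose_hypermatching[of M k n m a b]
    by (force simp: placing_matchings_def)
qed

lemma card_placing_matchings_transpose:
  assumes "j \<in> {1..n} - T" "j' \<in> {1..n} - T" "i < m"
  shows "card {M \<in> placing_matchings k n m T g. j' \<in> M ! i}
       = card {M \<in> placing_matchings k n m T g. j \<in> M ! i}"
proof -
  let ?P = "placing_matchings k n m T g" and ?\<tau> = "map ((`) (transpose j j'))"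
  have involution: "(`) (transpose j j') \<circ> (`) (transpose j j') = id"
    by (simp add: fun_eq_iff image_image)
  have mem_swap: "?\<tau> M \<in> ?P" "j' \<in> ?\<tau> M ! i \<longleftrightarrow> j \<in> M ! i" "j \<in> ?\<tau> M ! i \<longleftrightarrow> j' \<in> M ! i"
    if "M \<in> ?P" for M
  proof -
    have "i < length M"
      using that assms by (simp add: placing_matchings_def hypermatchings_def)
    then show "j' \<in> ?\<tau> M ! i \<longleftrightarrow> j \<in> M ! i" "j \<in> ?\<tau> M ! i \<longleftrightarrow> j' \<in> M ! i"
      by (simp_all add: transpose_mem_image_iff)
    show "?\<tau> M \<in> ?P"
      by (rule transpose_placing_matching[OF that assms(1,2)])
  qed
  have "bij_betw ?\<tau> {M \<in> ?P. j \<in> M ! i} {M \<in> ?P. j' \<in> M ! i}"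
    by (rule bij_betw_byWitness[where f' = ?\<tau>]) (auto simp: involution mem_swap)
  then show ?thesis
    by (simp add: bij_betw_same_card)
qed

text \<open>Double counting: each of the n - |T| free coordinates lies in block g j in equally
  many matchings, and that block holds at most k of them.\<close>

lemma card_placing_matchings_insert_le:
  assumes "finite T" "T \<subseteq> {1..n}" "j \<in> {1..n} - T"
  shows "card (placing_matchings k n m (insert j T) g) * (n - card T)
       \<le> k * card (placing_matchings k n m T g)"
proof (cases "g j < m")
  case False
  then have "placing_matchings k n m (insert j T) g = {}"
    by (auto simp: placing_matchings_def)
  then show ?thesis by simp
next
  case True
  let ?S = "placing_matchings k n m T g" and ?D = "{1..n} - T" and ?i = "g j"
  have insert_eq: "placing_matchings k n m (insert j T) g = {M \<in> ?S. j \<in> M ! ?i}"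
    using True by (auto simp: placing_matchings_def)
  have "card ?D * card {M \<in> ?S. j \<in> M ! ?i} = (\<Sum>j'\<in>?D. card {M \<in> ?S. j \<in> M ! ?i})"
    by simp
  also have "\<dots> = (\<Sum>j'\<in>?D. card {M \<in> ?S. j' \<in> M ! ?i})"
    by (rule sum.cong [OF refl], rule card_placing_matchings_transpose [symmetric])
      (use assms True in auto)
  also have "\<dots> = (\<Sum>M\<in>?S. card {j'\<in>?D. j' \<in> M ! ?i})"
    by (rule sum_multicount_gen [symmetric]) (auto simp: finite_placing_matchings)
  also have "\<dots> \<le> (\<Sum>M\<in>?S. k)"
  proof (rule sum_mono)
    fix M assume "M \<in> ?S"
    then have block: "M ! ?i \<subseteq> {1..n}" "card (M ! ?i) = k"
      using True by (auto simp: placing_matchings_def hypermatchings_def)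
    then have "finite (M ! ?i)"
      using finite_subset by blast
    then show "card {j'\<in>?D. j' \<in> M ! ?i} \<le> k"
      using block(2) card_mono[of "M ! ?i" "{j'\<in>?D. j' \<in> M ! ?i}"] by auto
  qed
  finally show ?thesis
    using assms by (simp add: insert_eq card_Diff_subset mult.commute)
qed

lemma card_placing_matchings_mult_falling_fact_le:
  assumes "finite T" "T \<subseteq> {1..n}"
  shows "card (placing_matchings k n m T g) * falling_fact n (card T)
       \<le> k ^ card T * card (hypermatchings k n m)"
  using assms
proof (induction T rule: finite_induct)
  case empty
  then show ?case
    by (simp add: placing_matchings_def falling_fact_def)
next
  case (insert j T)
  have "card (placing_matchings k n m (insert j T) g) * falling_fact n (card (insert j T))
      = card (placing_matchings k n m (insert j T) g) * (n - card T) * falling_fact n (card T)"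
    using insert by (simp add: falling_fact_def ac_simps)
  also have "\<dots> \<le> k * card (placing_matchings k n m T g) * falling_fact n (card T)"
    using insert by (intro mult_right_mono card_placing_matchings_insert_le) auto
  also have "\<dots> \<le> k * (k ^ card T * card (hypermatchings k n m))"
    using insert by (simp add: mult.assoc)
  finally show ?case
    using insert by simp
qed

definition block_assignments :: "nat \<Rightarrow> nat set \<Rightarrow> nat \<Rightarrow> (nat \<Rightarrow> nat) set" where
  "block_assignments m A b = {g \<in> A \<rightarrow>\<^sub>E {..<m}. card (g ` A) = b}"

lemma finite_block_assignments: "finite A \<Longrightarrow> finite (block_assignments m A b)"
  unfolding block_assignments_def by (rule finite_subset[of _ "A \<rightarrow>\<^sub>E {..<m}"]) (auto intro!: finite_PiE)

lemma card_block_assignments_le: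
  assumes "finite A"
  shows "card (block_assignments m A b) \<le> (m choose b) * b ^ card A"
proof -
  let ?Bs = "{B. B \<subseteq> {..<m} \<and> card B = b}"
  have "block_assignments m A b \<subseteq> (\<Union>B\<in>?Bs. A \<rightarrow>\<^sub>E B)"
  proof
    fix g assume "g \<in> block_assignments m A b"
    then have "g ` A \<in> ?Bs" "g \<in> A \<rightarrow>\<^sub>E g ` A"
      by (auto simp: block_assignments_def PiE_def Pi_def)
    then show "g \<in> (\<Union>B\<in>?Bs. A \<rightarrow>\<^sub>E B)"
      by blast
  qed
  then have "card (block_assignments m A b) \<le> card (\<Union>B\<in>?Bs. A \<rightarrow>\<^sub>E B)"
    by (rule card_mono[rotated]) (use assms in \<open>auto intro!: finite_PiE dest: finite_subset\<close>)
  also have "\<dots> \<le> (\<Sum>B\<in>?Bs. card (A \<rightarrow>\<^sub>E B))"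
    by (rule card_UN_le) simp
  also have "\<dots> = (\<Sum>B\<in>?Bs. b ^ card A)"
    by (rule sum.cong) (use assms in \<open>auto simp: card_PiE\<close>)
  also have "\<dots> = (m choose b) * b ^ card A"
    using n_subsets[of "{..<m}" b] by simp
  finally show ?thesis .
qed

text \<open>A configuration (Jo, Je, g, h) records the support coordinates Jo lying in blocks of
  K_set, those Je lying in the other blocks, and the blocks containing them: g hits \<kappa> blocks
  and h hits r blocks.\<close>

definition configurations :: "nat \<Rightarrow> nat \<Rightarrow> nat \<Rightarrow> nat \<Rightarrow> nat \<Rightarrow> nat \<Rightarrow>
    (nat set \<times> nat set \<times> (nat \<Rightarrow> nat) \<times> (nat \<Rightarrow> nat)) set" where
  "configurations m u oo \<eta> \<kappa> r =
     (SIGMA Jo:{X. X \<subseteq> {1..u} \<and> card X = oo}.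
      SIGMA Je:{Y. Y \<subseteq> {1..u} \<and> card Y = \<eta> \<and> Jo \<inter> Y = {}}.
        block_assignments m Jo \<kappa> \<times> block_assignments m Je r)"

definition configuration_matchings ::
    "nat \<Rightarrow> nat \<Rightarrow> nat \<Rightarrow> nat set \<times> nat set \<times> (nat \<Rightarrow> nat) \<times> (nat \<Rightarrow> nat) \<Rightarrow> nat set list set" where
  "configuration_matchings k n m =
     (\<lambda>(Jo, Je, g, h). placing_matchings k n m (Jo \<union> Je) (\<lambda>j. if j \<in> Jo then g j else h j))"

lemma finite_configurations: "finite (configurations m u oo \<eta> \<kappa> r)"
  unfolding configurations_def
  by (intro finite_SigmaI finite_cartesian_product finite_block_assignments)
    (auto dest: finite_subset simp: finite_Collect_subsets)

lemma card_configurations_le: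
  "card (configurations m u oo \<eta> \<kappa> r)
     \<le> (u choose oo) * (u choose \<eta>) * ((m choose \<kappa>) * \<kappa> ^ oo) * ((m choose r) * r ^ \<eta>)"
proof -
  let ?Jos = "{X. X \<subseteq> {1..u} \<and> card X = oo}"
  let ?Jes = "\<lambda>Jo. {Y. Y \<subseteq> {1..u} \<and> card Y = \<eta> \<and> Jo \<inter> Y = {}}"
  let ?G = "\<lambda>Jo Je. block_assignments m Jo \<kappa> \<times> block_assignments m Je r"
  have finite_Jes: "finite (?Jes Jo)" for Jo
    by (rule finite_subset[of _ "Pow {1..u}"]) auto
  have card_Jes: "card (?Jes Jo) \<le> u choose \<eta>" for Jo
  proof -
    have "card (?Jes Jo) \<le> card {Y. Y \<subseteq> {1..u} \<and> card Y = \<eta>}"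
      by (rule card_mono) (auto simp: finite_Collect_subsets)
    then show ?thesis
      by (simp add: n_subsets)
  qed
  let ?c = "((m choose \<kappa>) * \<kappa> ^ oo) * ((m choose r) * r ^ \<eta>)"
  have card_G: "card (?G Jo Je) \<le> ?c"
    if "Jo \<in> ?Jos" "Je \<in> ?Jes Jo" for Jo Je
    using that card_block_assignments_le[of Jo m \<kappa>] card_block_assignments_le[of Je m r]
    by (auto simp: card_cartesian_product intro!: mult_le_mono dest: finite_subset)
  have "card (configurations m u oo \<eta> \<kappa> r) \<le> (\<Sum>Jo\<in>?Jos. card (SIGMA Je:?Jes Jo. ?G Jo Je))"
    unfolding configurations_def by (rule card_Sigma_le_sum) (simp add: finite_Collect_subsets)
  also have "\<dots> \<le> (\<Sum>Jo\<in>?Jos. \<Sum>Je\<in>?Jes Jo. card (?G Jo Je))"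
    by (intro sum_mono card_Sigma_le_sum finite_Jes)
  also have "\<dots> \<le> (\<Sum>Jo\<in>?Jos. card (?Jes Jo) * ?c)"
  proof (rule sum_mono)
    fix Jo assume "Jo \<in> ?Jos"
    then have "\<And>Je. Je \<in> ?Jes Jo \<Longrightarrow> card (?G Jo Je) \<le> ?c"
      using card_G by blast
    then show "(\<Sum>Je\<in>?Jes Jo. card (?G Jo Je)) \<le> card (?Jes Jo) * ?c"
      using sum_bounded_above[of "?Jes Jo" "\<lambda>Je. card (?G Jo Je)" ?c] by simp
  qed
  also have "\<dots> \<le> (\<Sum>Jo\<in>?Jos. (u choose \<eta>) * ?c)"
    by (intro sum_mono mult_le_mono1 card_Jes)
  also have "\<dots> = (u choose oo) * (u choose \<eta>) * ((m choose \<kappa>) * \<kappa> ^ oo) * ((m choose r) * r ^ \<eta>)"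
    using n_subsets[of "{1..u}" oo] by (simp add: ac_simps)
  finally show ?thesis .
qed

lemma configurations_memD:
  assumes "(Jo, Je, g, h) \<in> configurations m u oo \<eta> \<kappa> r"
  shows "Jo \<union> Je \<subseteq> {1..u}" "card (Jo \<union> Je) = oo + \<eta>" "oo + \<eta> \<le> u" "\<kappa> \<le> oo"
proof -
  have J: "Jo \<subseteq> {1..u}" "card Jo = oo" "Je \<subseteq> {1..u}" "card Je = \<eta>" "Jo \<inter> Je = {}"
    and g: "g \<in> block_assignments m Jo \<kappa>"
    using assms by (auto simp: configurations_def)
  show "\<kappa> \<le> oo"
    using card_image_le[of Jo g] finite_subset[OF J(1)] J(2) g by (auto simp: block_assignments_def)
  show "Jo \<union> Je \<subseteq> {1..u}"
    using J by blast
  have "finite Jo" "finite Je"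
    using J(1,3) finite_subset by blast+
  then show card: "card (Jo \<union> Je) = oo + \<eta>"
    using card_Un_disjoint[of Jo Je] J(2,4,5) by simp
  have "card (Jo \<union> Je) \<le> card {1..u}"
    by (rule card_mono) (use \<open>Jo \<union> Je \<subseteq> {1..u}\<close> in auto)
  then show "oo + \<eta> \<le> u"
    using card by simp
qed

definition block_of :: "nat set list \<Rightarrow> nat \<Rightarrow> nat" where
  "block_of M j = (THE i. i < length M \<and> j \<in> M ! i)"

lemma block_of_eq:
  assumes "M \<in> hypermatchings k n m" "i < m" "j \<in> M ! i"
  shows "block_of M j = i"
  unfolding block_of_def
proof (rule the_equality)
  show "i < length M \<and> j \<in> M ! i"
    using assms by (simp add: hypermatchings_def)
  show "i' = i" if "i' < length M \<and> j \<in> M ! i'" for i'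
  proof (rule ccontr)
    assume "i' \<noteq> i"
    then have "M ! i' \<inter> M ! i = {}"
      using assms(1,2) that by (simp add: hypermatchings_def)
    then show False
      using that assms(3) by blast
  qed
qed

lemma test_vectors_le: "f \<in> test_vectors q n u \<Longrightarrow> u \<le> n"
  by (simp add: test_vectors_def)

lemma test_vector_nonzero:
  assumes "f \<in> test_vectors q n u" "f j \<noteq> 0"
  shows "j \<in> {1..u}" "0 < f j" "f j < int q"
proof -
  have "(1 \<le> j \<and> j \<le> u \<longrightarrow> f j \<in> {1..int q - 1}) \<and> (\<not> (1 \<le> j \<and> j \<le> u) \<longrightarrow> f j = 0)"
    using assms(1) by (simp add: test_vectors_def)
  then show "j \<in> {1..u}" "0 < f j" "f j < int q"
    using assms(2) by auto
qed

lemma finite_test_vectors: "finite (test_vectors q n u)"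
proof (rule finite_imageD)
  show "inj_on (\<lambda>f. restrict f {1..u}) (test_vectors q n u)"
  proof (rule inj_onI)
    fix f g assume "f \<in> test_vectors q n u" "g \<in> test_vectors q n u"
      and "restrict f {1..u} = restrict g {1..u}"
    then show "f = g"
      by (auto simp: test_vectors_def fun_eq_iff restrict_def split: if_splits) metis
  qed
  have "(\<lambda>f. restrict f {1..u}) ` test_vectors q n u \<subseteq> {1..u} \<rightarrow>\<^sub>E {1..int q - 1}"
    by (auto simp: test_vectors_def)
  then show "finite ((\<lambda>f. restrict f {1..u}) ` test_vectors q n u)"
    by (rule finite_subset) (intro finite_PiE; simp)
qed

lemma O_set_block:
  assumes M: "M \<in> hypermatchings k n m" and j: "j \<in> O_set q n f M"
  shows "block_of M j < m" "block_of M j \<in> K_set q f M" "j \<in> M ! block_of M j"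
proof -
  obtain i where "i < m" "i \<in> K_set q f M" "j \<in> M ! i"
    using M j by (auto simp: O_set_def hypermatchings_def)
  with block_of_eq[OF M] show "block_of M j < m" "block_of M j \<in> K_set q f M" "j \<in> M ! block_of M j"
    by simp_all
qed

lemma E_set_block:
  assumes M: "M \<in> hypermatchings k n m" and j: "j \<in> E_set q n f M"
  shows "block_of M j < m" "block_of M j \<notin> K_set q f M" "j \<in> M ! block_of M j"
proof -
  obtain i where "i < m" "i \<notin> K_set q f M" "j \<in> M ! i"
    using M j by (auto simp: E_set_def hypermatchings_def)
  with block_of_eq[OF M] show "block_of M j < m" "block_of M j \<notin> K_set q f M" "j \<in> M ! block_of M j"
    by simp_all
qed

lemma K_set_less: "M \<in> hypermatchings k n m \<Longrightarrow> i \<in> K_set q f M \<Longrightarrow> i < m"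
  by (simp add: K_set_def hypermatchings_def)

lemma O_set_Int_E_set:
  assumes "M \<in> hypermatchings k n m"
  shows "O_set q n f M \<inter> E_set q n f M = {}"
proof (rule equals0I)
  fix j assume "j \<in> O_set q n f M \<inter> E_set q n f M"
  then have "block_of M j \<in> K_set q f M" "block_of M j \<notin> K_set q f M"
    using O_set_block(2)[OF assms] E_set_block(2)[OF assms] by blast+
  then show False
    by simp
qed

lemma image_block_of_O_set:
  assumes M: "M \<in> hypermatchings k n m"
  shows "block_of M ` O_set q n f M = K_set q f M"
proof
  show "block_of M ` O_set q n f M \<subseteq> K_set q f M"
    using O_set_block[OF M] by blast
  show "K_set q f M \<subseteq> block_of M ` O_set q n f M"
  proof
    fix i assume i: "i \<in> K_set q f M"
    then have "\<not> int q dvd (\<Sum>j\<in>M ! i. f j)"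
      by (simp add: K_set_def)
    then obtain j where j: "j \<in> M ! i" "f j \<noteq> 0"
      by (metis dvd_0_right sum.neutral)
    have "i < m"
      using K_set_less[OF M i] .
    then have "j \<in> {1..n}" "i < length M"
      using hypermatching_nth[OF M \<open>i < m\<close>] j(1) by blast+
    then have "j \<in> O_set q n f M"
      using i j unfolding O_set_def by blast
    then show "i \<in> block_of M ` O_set q n f M"
      by (rule rev_image_eqI) (simp add: block_of_eq[OF M \<open>i < m\<close> j(1)])
  qed
qed

lemma finite_O_set: "finite (O_set q n f M)"
  by (rule finite_subset[of _ "{1..n}"]) (auto simp: O_set_def)

lemma finite_E_set: "finite (E_set q n f M)"
  by (rule finite_subset[of _ "{1..n}"]) (auto simp: E_set_def)

lemma E_set_block_not_singleton:
  assumes f: "f \<in> test_vectors q n u" and M: "M \<in> hypermatchings k n m" and j: "j \<in> E_set q n f M"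
  shows "2 \<le> card {j' \<in> E_set q n f M. block_of M j' = block_of M j}"
proof (rule ccontr)
  let ?i = "block_of M j" and ?F = "{j' \<in> E_set q n f M. block_of M j' = block_of M j}"
  assume "\<not> 2 \<le> card ?F"
  moreover have "j \<in> ?F" "finite ?F"
    using j finite_E_set by auto
  ultimately have F: "?F = {j}"
    using card_le_Suc0_iff_eq[of ?F] by auto
  have i: "?i < m" "?i \<notin> K_set q f M" "j \<in> M ! ?i"
    using E_set_block[OF M j] by simp_all
  have zero: "f j' = 0" if "j' \<in> M ! ?i - {j}" for j'
  proof (rule ccontr)
    assume "f j' \<noteq> 0"
    moreover have "j' \<in> {1..n}" "?i < length M"
      using hypermatching_nth[OF M i(1)] that i(1) by auto
    ultimately have "j' \<in> E_set q n f M"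
      using that i unfolding E_set_def by blast
    moreover have "block_of M j' = ?i"
      using block_of_eq[OF M i(1)] that by simp
    ultimately show False
      using F that by blast
  qed
  have "finite (M ! ?i)"
    using hypermatching_nth(2)[OF M i(1)] finite_subset by blast
  then have "(\<Sum>j'\<in>M ! ?i. f j') = f j"
    using i(3) zero by (simp add: sum.remove)
  moreover have "int q dvd (\<Sum>j'\<in>M ! ?i. f j')"
    using i hypermatching_nth(1)[OF M i(1)] by (simp add: K_set_def)
  moreover have "0 < f j" "f j < int q"
    using test_vector_nonzero[OF f] j by (auto simp: E_set_def)
  ultimately show False
    using zdvd_imp_le by fastforce
qed

lemma two_mult_card_blocks_E_set_le:
  assumes "f \<in> test_vectors q n u" "M \<in> hypermatchings k n m"
  shows "2 * card (block_of M ` E_set q n f M) \<le> card (E_set q n f M)"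
  by (rule mult_card_image_le_card[OF finite_E_set]) (auto intro: E_set_block_not_singleton[OF assms])

lemma card_O_set_add_card_E_set_le:
  assumes M: "M \<in> hypermatchings k n m"
  shows "card (O_set q n f M) + card (E_set q n f M)
       \<le> k * (card (K_set q f M) + card (block_of M ` E_set q n f M))"
proof -
  let ?O = "O_set q n f M" and ?E = "E_set q n f M"
  have blocks: "\<forall>j\<in>?O \<union> ?E. block_of M j < m \<and> j \<in> M ! block_of M j"
    using O_set_block[OF M] E_set_block[OF M] by blast
  have "card ?O + card ?E = card (?O \<union> ?E)"
    using card_Un_disjoint[OF finite_O_set finite_E_set O_set_Int_E_set[OF M]] by simp
  also have "\<dots> \<le> k * card (block_of M ` (?O \<union> ?E))"
  proof (rule card_le_mult_card_image)
    fix i assume "i \<in> block_of M ` (?O \<union> ?E)"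
    then have "i < m" and sub: "{j \<in> ?O \<union> ?E. block_of M j = i} \<subseteq> M ! i"
      using blocks by blast+
    have "finite (M ! i)"
      using hypermatching_nth(2)[OF M \<open>i < m\<close>] by (rule finite_subset) simp
    then show "card {j \<in> ?O \<union> ?E. block_of M j = i} \<le> k"
      using card_mono[OF _ sub] hypermatching_nth(3)[OF M \<open>i < m\<close>] by simp
  qed (simp add: finite_O_set finite_E_set)
  also have "\<dots> \<le> k * (card (K_set q f M) + card (block_of M ` ?E))"
    using card_Un_le[of "block_of M ` ?O" "block_of M ` ?E"] image_block_of_O_set[OF M]
    by (simp add: image_Un)
  finally show ?thesis .
qed

lemma event_matching_configuration:
  assumes f: "f \<in> test_vectors q n u" and M: "M \<in> hypermatchings k n m"
  defines "Jo \<equiv> O_set q n f M" and "Je \<equiv> E_set q n f M"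
  defines "x \<equiv> (Jo, Je, restrict (block_of M) Jo, restrict (block_of M) Je)"
  shows "x \<in> configurations m u (card Jo) (card Je) (card (K_set q f M)) (card (block_of M ` Je))"
    and "M \<in> configuration_matchings k n m x"
proof -
  have support: "Jo \<subseteq> {1..u}" "Je \<subseteq> {1..u}"
    using test_vector_nonzero(1)[OF f] by (auto simp: Jo_def Je_def O_set_def E_set_def)
  have "restrict (block_of M) Jo \<in> block_assignments m Jo (card (K_set q f M))"
    using O_set_block(1)[OF M] image_block_of_O_set[OF M] by (auto simp: block_assignments_def Jo_def)
  moreover have "restrict (block_of M) Je \<in> block_assignments m Je (card (block_of M ` Je))"
    using E_set_block(1)[OF M] by (auto simp: block_assignments_def Je_def)
  ultimately show "x \<in> configurations m u (card Jo) (card Je) (card (K_set q f M)) (card (block_of M ` Je))"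
    using support O_set_Int_E_set[OF M] by (simp add: configurations_def x_def Jo_def Je_def)
  have "\<forall>j\<in>Jo \<union> Je. block_of M j < m \<and> j \<in> M ! block_of M j"
    using O_set_block[OF M] E_set_block[OF M] by (auto simp: Jo_def Je_def)
  then show "M \<in> configuration_matchings k n m x"
    using M by (auto simp: configuration_matchings_def placing_matchings_def x_def)
qed

lemma card_configuration_matchings_le:
  assumes "x \<in> configurations m u oo \<eta> \<kappa> r" "u \<le> n"
  shows "real (card (configuration_matchings k n m x))
       \<le> real (card (hypermatchings k n m)) * (real k ^ (oo + \<eta>) / real (falling_fact n (oo + \<eta>)))"
proof -
  obtain Jo Je g h where x: "x = (Jo, Je, g, h)"
    by (metis prod_cases4)
  have sub: "Jo \<union> Je \<subseteq> {1..n}" and card: "card (Jo \<union> Je) = oo + \<eta>"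
    and "oo + \<eta> \<le> n"
    using configurations_memD[OF assms(1)[unfolded x]] assms(2) by auto
  have "finite (Jo \<union> Je)"
    using sub by (rule finite_subset) simp
  from card_placing_matchings_mult_falling_fact_le[OF this sub]
  have "real (card (configuration_matchings k n m x) * falling_fact n (oo + \<eta>))
      \<le> real (k ^ (oo + \<eta>) * card (hypermatchings k n m))"
    by (simp only: of_nat_le_iff) (simp add: x configuration_matchings_def card)
  moreover have "0 < falling_fact n (oo + \<eta>)"
    using \<open>oo + \<eta> \<le> n\<close> by (rule falling_fact_pos)
  ultimately show ?thesis
    by (simp add: field_simps)
qed

lemma event_subset_configuration_matchings:
  assumes "f \<in> test_vectors q n u"
  shows "{M \<in> hypermatchings k n m. card (K_set q f M) = \<kappa> \<and> card (E_set q n f M) = \<eta> \<and> card (O_set q n f M) = oo}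
    \<subseteq> (\<Union>r\<in>{r. 2 * r \<le> \<eta> \<and> oo + \<eta> \<le> k * (\<kappa> + r)}.
         \<Union>x\<in>configurations m u oo \<eta> \<kappa> r. configuration_matchings k n m x)"
proof clarify
  fix M assume M: "M \<in> hypermatchings k n m"
  let ?r = "card (block_of M ` E_set q n f M)"
  have "2 * ?r \<le> card (E_set q n f M)"
    "card (O_set q n f M) + card (E_set q n f M) \<le> k * (card (K_set q f M) + ?r)"
    using two_mult_card_blocks_E_set_le[OF assms M] card_O_set_add_card_E_set_le[OF M] by simp_all
  with event_matching_configuration[OF assms M]
  show "M \<in> (\<Union>r\<in>{r. 2 * r \<le> card (E_set q n f M)
           \<and> card (O_set q n f M) + card (E_set q n f M) \<le> k * (card (K_set q f M) + r)}.
         \<Union>x\<in>configurations m u (card (O_set q n f M)) (card (E_set q n f M)) (card (K_set q f M)) r.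
           configuration_matchings k n m x)"
    by blast
qed

lemma event_prob_le_sum:
  fixes k oo \<eta> \<kappa> :: nat
  assumes f: "f \<in> test_vectors q n u"
  defines "R \<equiv> {r. 2 * r \<le> \<eta> \<and> oo + \<eta> \<le> k * (\<kappa> + r)}"
  shows "event_prob k n m q f oo \<eta> \<kappa>
       \<le> (\<Sum>r\<in>R. real (card (configurations m u oo \<eta> \<kappa> r))
                   * (real k ^ (oo + \<eta>) / real (falling_fact n (oo + \<eta>))))"
    (is "_ \<le> (\<Sum>r\<in>R. real (card (?C r)) * ?w)")
proof -
  let ?HM = "hypermatchings k n m"
  let ?Ev = "{M \<in> ?HM. card (K_set q f M) = \<kappa> \<and> card (E_set q n f M) = \<eta> \<and> card (O_set q n f M) = oo}"
  have finite_R: "finite R"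
    by (rule finite_subset[of _ "{..\<eta>}"]) (auto simp: R_def)
  have "card ?Ev \<le> card (\<Union>r\<in>R. \<Union>x\<in>?C r. configuration_matchings k n m x)"
    using event_subset_configuration_matchings[OF f] finite_R finite_configurations
    by (intro card_mono) (auto simp: R_def configuration_matchings_def finite_placing_matchings)
  also have "\<dots> \<le> (\<Sum>r\<in>R. \<Sum>x\<in>?C r. card (configuration_matchings k n m x))"
    using finite_R finite_configurations by (intro order_trans[OF card_UN_le] sum_mono card_UN_le)
  finally have "real (card ?Ev) \<le> real (\<Sum>r\<in>R. \<Sum>x\<in>?C r. card (configuration_matchings k n m x))"
    by (simp only: of_nat_le_iff)
  also have "\<dots> = (\<Sum>r\<in>R. \<Sum>x\<in>?C r. real (card (configuration_matchings k n m x)))"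
    by simp
  also have "\<dots> \<le> (\<Sum>r\<in>R. real (card (?C r)) * (real (card ?HM) * ?w))"
  proof (rule sum_mono)
    fix r
    show "(\<Sum>x\<in>?C r. real (card (configuration_matchings k n m x))) \<le> real (card (?C r)) * (real (card ?HM) * ?w)"
      using sum_bounded_above[of "?C r" "\<lambda>x. real (card (configuration_matchings k n m x))"]
        card_configuration_matchings_le f by (blast dest: test_vectors_le)
  qed
  finally show ?thesis
    by (cases "card ?HM = 0")
      (simp_all add: event_prob_def divide_le_eq sum_distrib_left sum_nonneg ac_simps)
qed

lemma card_configurations_weight_le_p_bound:
  assumes a: "0 < a" "a \<le> 1" and m: "real m \<le> a * real n" and k: "1 \<le> k"
    and r: "2 * r \<le> \<eta>" "oo + \<eta> \<le> k * (\<kappa> + r)" and "u \<le> n"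
  shows "real (card (configurations m u oo \<eta> \<kappa> r))
           * (real k ^ (oo + \<eta>) / real (falling_fact n (oo + \<eta>)))
         \<le> p_bound k a (exp 4 * real k) n u oo \<eta> \<kappa>"
    (is "real (card ?C) * ?w \<le> ?P")
proof (cases "?C = {}")
  case True
  then show ?thesis
    by (simp add: p_bound_nonneg)
next
  case False
  then have "\<kappa> \<le> oo" "oo + \<eta> \<le> u"
    using configurations_memD(3,4) by fast+
  have "real (card ?C) * ?w
      \<le> real ((u choose oo) * (u choose \<eta>) * ((m choose \<kappa>) * \<kappa> ^ oo) * ((m choose r) * r ^ \<eta>)) * ?w"
    by (intro mult_right_mono) (simp_all only: of_nat_le_iff card_configurations_le of_nat_0_le_iff
        divide_nonneg_nonneg zero_le_power)
  also have "\<dots> \<le> ?P"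
    using assms \<open>\<kappa> \<le> oo\<close> \<open>oo + \<eta> \<le> u\<close> by (intro configuration_weight_le_p_bound) auto
  finally show ?thesis .
qed

lemma event_prob_le:
  assumes f: "f \<in> test_vectors q n u" and k: "1 \<le> k"
    and a: "0 < a" "a \<le> 1" and m: "real m \<le> a * real n"
  shows "event_prob k n m q f oo \<eta> \<kappa> \<le> real (u + 1) * p_bound k a (exp 4 * real k) n u oo \<eta> \<kappa>"
proof -
  let ?R = "{r. 2 * r \<le> \<eta> \<and> oo + \<eta> \<le> k * (\<kappa> + r)}"
  let ?C = "configurations m u oo \<eta> \<kappa>"
  let ?w = "real k ^ (oo + \<eta>) / real (falling_fact n (oo + \<eta>))"
  let ?P = "p_bound k a (exp 4 * real k) n u oo \<eta> \<kappa>"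
  note sum_bound = event_prob_le_sum[OF f, where k = k and oo = oo and \<eta> = \<eta> and \<kappa> = \<kappa> and m = m]
  show ?thesis
  proof (cases "oo + \<eta> \<le> u")
    case False
    then have "?C r = {}" for r
      using configurations_memD(3) by fast
    then show ?thesis
      using sum_bound p_bound_nonneg[of "exp 4 * real k" k a n u oo \<eta> \<kappa>]
      by (simp add: order_trans[OF _ mult_nonneg_nonneg])
  next
    case True
    have "(\<Sum>r\<in>?R. real (card (?C r)) * ?w) \<le> real (card ?R) * ?P"
      using card_configurations_weight_le_p_bound[OF a m k] test_vectors_le[OF f]
      by (intro sum_bounded_above) auto
    also have "\<dots> \<le> real (u + 1) * ?P"
    proof (rule mult_right_mono)
      have "card ?R \<le> card {..\<eta>}"
        by (rule card_mono) auto
      then show "real (card ?R) \<le> real (u + 1)"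
        using True by simp
    qed (simp add: p_bound_nonneg)
    finally show ?thesis
      using sum_bound by linarith
  qed
qed

lemma p_q_le_p_bound:
  assumes "1 \<le> k" "0 < \<alpha>" "\<alpha> \<le> 1"
  shows "p_q k \<alpha> q n u oo \<eta> \<kappa> \<le> p_bound k \<alpha> (2 * exp 4 * real k) n u oo \<eta> \<kappa>"
proof -
  have "real (nat \<lfloor>\<alpha> * real n\<rfloor>) \<le> \<alpha> * real n"
    using assms by simp
  then have "p_q k \<alpha> q n u oo \<eta> \<kappa> \<le> real (u + 1) * p_bound k \<alpha> (exp 4 * real k) n u oo \<eta> \<kappa>"
    unfolding p_q_def using assms event_prob_le p_bound_nonneg
    by (intro Max.boundedI) (auto simp: finite_test_vectors)
  also have "\<dots> \<le> 2 ^ u * p_bound k \<alpha> (exp 4 * real k) n u oo \<eta> \<kappa>"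
  proof (intro mult_right_mono p_bound_nonneg)
    have "real (Suc u) \<le> real (2 ^ u)"
      by (simp only: of_nat_le_iff) (rule Suc_leI, rule less_exp)
    then show "real (u + 1) \<le> 2 ^ u"
      by simp
  qed simp
  also have "\<dots> = p_bound k \<alpha> (2 * exp 4 * real k) n u oo \<eta> \<kappa>"
    by (simp add: p_bound_mult_constant mult.assoc)
  finally show ?thesis .
qed

theorem lemma6p12:
  fixes k :: nat
  assumes "k \<ge> 2"
  shows "\<exists>C::real > 0. \<forall>q::nat. \<forall>\<alpha>::real. \<forall>n u oo \<eta> \<kappa> :: nat.
           q \<ge> 2 \<and> 0 < \<alpha> \<and> \<alpha> < 1 / real k \<and> \<alpha> * real n \<in> \<nat> \<longrightarrow>
           p_q k \<alpha> q n u oo \<eta> \<kappa> \<le>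
             \<alpha> powr ((real oo + real \<eta>) / real k) * C ^ u
             * (real n / real \<kappa>) ^ \<kappa>
             * (real u / sqrt (real n * real \<eta>)) ^ \<eta>
             * (real u / real n) ^ oo"
proof (intro exI[of _ "2 * exp 4 * real k"] conjI allI impI)
  show "0 < 2 * exp 4 * real k"
    using assms by simp
  fix q :: nat and \<alpha> :: real and n u oo \<eta> \<kappa> :: nat
  assume "2 \<le> q \<and> 0 < \<alpha> \<and> \<alpha> < 1 / real k \<and> \<alpha> * real n \<in> \<nat>"
  then have "0 < \<alpha>" "\<alpha> * real k < 1"
    using assms by (auto simp: field_simps)
  moreover have "\<alpha> * 1 \<le> \<alpha> * real k"
    using assms \<open>0 < \<alpha>\<close> by (intro mult_left_mono) auto
  ultimately have "0 < \<alpha>" "\<alpha> \<le> 1"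
    by linarith+
  with p_q_le_p_bound[of k \<alpha>] assms
  show "p_q k \<alpha> q n u oo \<eta> \<kappa> \<le> \<alpha> powr ((real oo + real \<eta>) / real k) * (2 * exp 4 * real k) ^ u
      * (real n / real \<kappa>) ^ \<kappa> * (real u / sqrt (real n * real \<eta>)) ^ \<eta> * (real u / real n) ^ oo"
    by (simp add: p_bound_def)
qed

end
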